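(* Let $H_{OK}=[h_1\cdots h_{18}]=[I_9\ M_{OK}]$ be the $9\times18$ binary matrix, where $I_9$ is the identity matrix ($h_i$ the $i$-th unit vector for $i\le9$) and $h_{10},\dots,h_{18}$ are, in order, the columns given in hexadecimal as 1A0, 174, A5, 173, 17, E8, 9, 18D, 1CE (each written as a 9-bit binary string, most significant bit as the top entry). Let $\mathcal P_{OK}$ be the partition of the column indices into the 11 subsets $\{1,2,4\},\{3\},\{5,8\},\{6,17\},\{7,10\},\{11,14\},\{12\},\{13,18\},\{15\},\{9\},\{16\}$. Then $\mathcal P_{OK}$ is a $(3,1)$-partition of $H_{OK}$: every vector of $\mathbb{F}_2^9$, including the zero vector, is the sum of at least one and at most three columns of $H_{OK}$ lying in pairwise distinct subsets of $\mathcal P_{OK}$. Moreover the $[18,9]_2$ code with parity-check matrix $H_{OK}$ has minimum distance $3$ and covering radius $3$ (so it is an $[18,9,3]_23,1$ code).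
   Context: For an $r\times n$ binary parity-check matrix $H$ and $0\le\ell\le R$, an $(R,\ell)$-partition is a partition of the columns of $H$ into nonempty subsets such that every vector of $\mathbb{F}_2^r$ (including zero) is the sum of at least $\ell$ and at most $R$ columns of $H$ lying in pairwise distinct subsets. An $[n,n-r,d]_2R,\ell$ code is a binary linear code of length $n$, codimension $r$, minimum distance $d$, covering radius $R$ (smallest $R$ such that every vector of $\mathbb{F}_2^r$ is a sum of at most $R$ columns of $H$), some parity-check matrix of which admits an $(R,\ell)$-partition. *)

theory Defs
  imports Main "HOL-Library.Z2"
begin

(* A binary r x n matrix H is given columnwise: H j i is the entry in row i of column j,
   with columns indexed by {1..n} and rows by {1..r}. *)

definition vecs :: "nat \<Rightarrow> (nat \<Rightarrow> bit) set" where
  "vecs r = {v. \<forall>i. i \<notin> {1..r} \<longrightarrow> v i = 0}"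

definition colsum :: "(nat \<Rightarrow> nat \<Rightarrow> bit) \<Rightarrow> nat set \<Rightarrow> (nat \<Rightarrow> bit)" where
  "colsum H S = (\<lambda>i. \<Sum>j\<in>S. H j i)"

definition is_col_partition :: "nat \<Rightarrow> nat set set \<Rightarrow> bool" where
  "is_col_partition n P \<longleftrightarrow>
     (\<forall>B\<in>P. B \<noteq> {}) \<and> \<Union>P = {1..n} \<and>
     (\<forall>B\<in>P. \<forall>C\<in>P. B \<noteq> C \<longrightarrow> B \<inter> C = {})"

definition transversal :: "nat set set \<Rightarrow> nat set \<Rightarrow> bool" where
  "transversal P S \<longleftrightarrow> (\<forall>B\<in>P. card (S \<inter> B) \<le> 1)"

definition is_Rl_partition ::
  "nat \<Rightarrow> nat \<Rightarrow> (nat \<Rightarrow> nat \<Rightarrow> bit) \<Rightarrow> nat \<Rightarrow> nat \<Rightarrow> nat set set \<Rightarrow> bool" where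
  "is_Rl_partition r n H R l P \<longleftrightarrow>
     l \<le> R \<and> is_col_partition n P \<and>
     (\<forall>v\<in>vecs r. \<exists>S. S \<subseteq> {1..n} \<and> transversal P S \<and>
        l \<le> card S \<and> card S \<le> R \<and> colsum H S = v)"

definition covering_radius :: "nat \<Rightarrow> nat \<Rightarrow> (nat \<Rightarrow> nat \<Rightarrow> bit) \<Rightarrow> nat" where
  "covering_radius r n H =
     (LEAST R. \<forall>v\<in>vecs r. \<exists>S. S \<subseteq> {1..n} \<and> card S \<le> R \<and> colsum H S = v)"

(* minimum distance of the binary code {x. H x^T = 0}: a codeword is identified with its
   support S \<subseteq> {1..n}; its weight is card S *)
definition min_distance :: "nat \<Rightarrow> (nat \<Rightarrow> nat \<Rightarrow> bit) \<Rightarrow> nat" where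
  "min_distance n H =
     (LEAST d. \<exists>S. S \<subseteq> {1..n} \<and> S \<noteq> {} \<and> card S = d \<and> colsum H S = (\<lambda>_. 0))"

(* hexadecimal values of columns h_10..h_18:
   1A0 = 416, 174 = 372, A5 = 165, 173 = 371, 17 = 23, E8 = 232, 9 = 9, 18D = 397, 1CE = 462 *)
definition M_OK_hex :: "nat list" where
  "M_OK_hex = [416, 372, 165, 371, 23, 232, 9, 397, 462]"

(* H_OK = [I_9 M_OK]; a column value c is written as a 9-bit string with the most significant
   bit as the top entry (row 1), so row i holds bit (9 - i) of c *)
definition H_OK :: "nat \<Rightarrow> nat \<Rightarrow> bit" where
  "H_OK j i =
     (if i \<in> {1..9} \<and> j \<in> {1..18} then
        (if j \<le> 9 then (if i = j then 1 else 0)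
         else of_nat ((M_OK_hex ! (j - 10)) div 2 ^ (9 - i) mod 2))
      else 0)"

definition P_OK :: "nat set set" where
  "P_OK = {{1,2,4},{3},{5,8},{6,17},{7,10},{11,14},{12},{13,18},{15},{9},{16}}"

end

theory Submission
  imports Defs
begin

text \<open>Encode a vector of F_2^9 as the 9-bit number whose binary digits are its
  entries; addition of vectors becomes \<open>xor\<close>. The covering property is then a finite
  computation: a table lists, for each of the 512 syndromes, at most three columns from distinct
  blocks of \<open>P_OK\<close> that add up to it. For the lower bounds, the columns are nonzero and
  pairwise distinct, so no nonempty set of at most two columns sums to zero, while
  columns 6, 9, 16 do; and the syndrome 14 (the sum of the unit vectors \<open>e\<^sub>6, e\<^sub>7, e\<^sub>8\<close>) is
  neither a column nor the sum of two columns.\<close>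

text \<open>Keep \<open>+\<close> on \<^typ>\<open>bit\<close> as field addition; by default the simplifier turns it into \<open>xor\<close>.\<close>

declare add_bit_eq_xor [simp del]

lemma colsum_empty [simp]: "colsum H {} = (\<lambda>_. 0)"
  by (simp add: colsum_def)

lemma colsum_insert:
  "finite S \<Longrightarrow> j \<notin> S \<Longrightarrow> colsum H (insert j S) = (\<lambda>i. H j i + colsum H S i)"
  by (simp add: colsum_def)

lemma colsum_card_le_2_cases [consumes 2, case_names empty singleton pair]:
  assumes "finite S" "card S \<le> 2"
  obtains "S = {}"
  | a where "S = {a}" "colsum H S = H a"
  | a b where "a \<noteq> b" "S = {a, b}" "colsum H S = (\<lambda>i. H a i + H b i)"
proof -
  consider "card S = 0" | "card S = 1" | "card S = 2"
    using assms(2) by linarith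
  then show thesis
  proof cases
    case 1
    then show thesis using assms(1) that(1) by simp
  next
    case 2
    then obtain a where "S = {a}" by (auto simp: card_1_singleton_iff)
    then show thesis using that(2) by (simp add: colsum_insert)
  next
    case 3
    then obtain a b where "a \<noteq> b" "S = {a, b}" by (auto simp: card_2_iff)
    then show thesis using that(3) by (simp add: colsum_insert)
  qed
qed

lemma bit_add_eq_0_iff: "(x::bit) + y = 0 \<longleftrightarrow> x = y"
  by (cases x; cases y) simp_all

lemma min_distance_eq_3I:
  assumes inj: "inj_on H {1..n}" and nonzero: "\<forall>j\<in>{1..n}. H j \<noteq> (\<lambda>_. 0)"
    and codeword: "S \<subseteq> {1..n}" "card S = 3" "colsum H S = (\<lambda>_. 0)"
  shows "min_distance n H = 3"
  unfolding min_distance_def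
proof (rule Least_equality)
  show "\<exists>S. S \<subseteq> {1..n} \<and> S \<noteq> {} \<and> card S = 3 \<and> colsum H S = (\<lambda>_. 0)"
    using codeword by (intro exI[of _ S]) auto
next
  fix d assume "\<exists>T. T \<subseteq> {1..n} \<and> T \<noteq> {} \<and> card T = d \<and> colsum H T = (\<lambda>_. 0)"
  then obtain T where T: "T \<subseteq> {1..n}" "T \<noteq> {}" "card T = d" "colsum H T = (\<lambda>_. 0)"
    by blast
  show "3 \<le> d"
  proof (rule ccontr)
    assume "\<not> 3 \<le> d"
    with T have "finite T" "card T \<le> 2" by (auto intro: finite_subset)
    then show False
    proof (cases rule: colsum_card_le_2_cases[where H = H])
      case (singleton a)
      then show False using T nonzero by auto
    next
      case (pair a b)
      then have "H a = H b"
        using T(4) by (simp add: fun_eq_iff bit_add_eq_0_iff)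
      with pair T(1) inj show False by (simp add: inj_on_eq_iff)
    qed (use T in simp)
  qed
qed

lemma covering_radius_eqI:
  assumes "\<forall>v\<in>vecs r. \<exists>S. S \<subseteq> {1..n} \<and> card S \<le> R \<and> colsum H S = v"
    and "v \<in> vecs r" and "\<And>S. S \<subseteq> {1..n} \<Longrightarrow> card S < R \<Longrightarrow> colsum H S \<noteq> v"
  shows "covering_radius r n H = R"
  unfolding covering_radius_def
proof (rule Least_equality)
  fix R' assume "\<forall>v\<in>vecs r. \<exists>S. S \<subseteq> {1..n} \<and> card S \<le> R' \<and> colsum H S = v"
  then show "R \<le> R'" using assms(2,3) by (meson not_le order_le_less_trans)
qed (use assms(1) in blast)

lemma transversal_if_inj_on_label:
  assumes "\<And>B x y. B \<in> P \<Longrightarrow> x \<in> B \<Longrightarrow> y \<in> B \<Longrightarrow> f x = f y" and "inj_on f S"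
  shows "transversal P S"
  unfolding transversal_def
proof
  fix B assume "B \<in> P"
  then have "\<forall>x\<in>S \<inter> B. \<forall>y\<in>S \<inter> B. x = y"
    using assms by (auto dest: inj_onD)
  then show "card (S \<inter> B) \<le> 1"
    by (cases "finite (S \<inter> B)") (auto simp: card_le_Suc0_iff_eq)
qed

definition bitvec :: "nat \<Rightarrow> nat \<Rightarrow> nat \<Rightarrow> bit" where
  "bitvec r c = (\<lambda>i. if i \<in> {1..r} then of_bool (bit c (r - i)) else 0)"

lemma bitvec_in_vecs: "bitvec r c \<in> vecs r"
  by (simp add: vecs_def bitvec_def)

lemma bitvec_0 [simp]: "bitvec r 0 = (\<lambda>_. 0)"
  by (auto simp: bitvec_def)

lemma bitvec_xor: "bitvec r (xor a b) = (\<lambda>i. bitvec r a i + bitvec r b i)"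
  by (auto simp: bitvec_def bit_xor_iff)

lemma bitvec_eq_iff: "bitvec r a = bitvec r b \<longleftrightarrow> take_bit r a = take_bit r b"
proof
  assume eq: "bitvec r a = bitvec r b"
  show "take_bit r a = take_bit r b"
  proof (rule bit_eqI)
    fix k
    show "bit (take_bit r a) k \<longleftrightarrow> bit (take_bit r b) k"
    proof (cases "k < r")
      case True
      then have "r - k \<in> {1..r}" "r - (r - k) = k" by auto
      then have "(of_bool (bit a k) :: bit) = of_bool (bit b k)"
        using fun_cong[OF eq, of "r - k"] by (simp add: bitvec_def)
      then show ?thesis by (cases "bit a k"; cases "bit b k") (simp_all add: bit_take_bit_iff)
    qed (simp add: bit_take_bit_iff)
  qed
next
  assume "take_bit r a = take_bit r b"
  then have "bit a k = bit b k" if "k < r" for k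
    using that by (metis bit_take_bit_iff)
  then show "bitvec r a = bitvec r b"
    by (auto simp: bitvec_def)
qed

lemma vecs_eq_bitvec_image: "vecs r = bitvec r ` {..<2 ^ r}"
proof
  show "bitvec r ` {..<2 ^ r} \<subseteq> vecs r" by (auto simp: bitvec_in_vecs)
next
  show "vecs r \<subseteq> bitvec r ` {..<2 ^ r}"
  proof
    fix v assume v: "v \<in> vecs r"
    define c :: nat where "c = horner_sum of_bool 2 (map (\<lambda>k. v (r - k) = 1) [0..<r])"
    have "take_bit r c = c"
      unfolding c_def take_bit_horner_sum_bit_eq by simp
    then have "c < 2 ^ r" by (simp add: take_bit_nat_eq_self_iff)
    moreover have "v = bitvec r c"
    proof
      fix i
      show "v i = bitvec r c i"
      proof (cases "i \<in> {1..r}")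
        case True
        then have "bit c (r - i) \<longleftrightarrow> v i = 1"
          by (auto simp: c_def bit_horner_sum_bit_iff)
        then show ?thesis using True by (cases "v i") (auto simp: bitvec_def)
      qed (use v in \<open>auto simp: vecs_def bitvec_def\<close>)
    qed
    ultimately show "v \<in> bitvec r ` {..<2 ^ r}" by blast
  qed
qed

lemma colsum_set_eq_bitvec:
  assumes "distinct xs" and "\<And>j. j \<in> set xs \<Longrightarrow> H j = bitvec r (c j)"
  shows "colsum H (set xs) = bitvec r (foldr (\<lambda>j. xor (c j)) xs 0)"
  using assms by (induction xs) (simp_all add: colsum_insert bitvec_xor)

definition H_OK_code :: "nat \<Rightarrow> nat" where
  "H_OK_code j = (if j \<le> 9 then 2 ^ (9 - j) else M_OK_hex ! (j - 10))"

lemma of_nat_mod_2_bit: "(of_nat (x mod 2) :: bit) = of_bool (odd x)"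
  by (cases "even x") (auto simp: even_iff_mod_2_eq_zero odd_iff_mod_2_eq_one)

lemma H_OK_eq_bitvec:
  assumes "j \<in> {1..18}"
  shows "H_OK j = bitvec 9 (H_OK_code j)"
proof
  fix i
  show "H_OK j i = bitvec 9 (H_OK_code j) i"
  proof (cases "j \<le> 9")
    case True
    then show ?thesis using assms by (auto simp: H_OK_def bitvec_def H_OK_code_def bit_exp_iff)
  next
    case False
    then show ?thesis
      using assms by (simp add: H_OK_def bitvec_def H_OK_code_def bit_iff_odd of_nat_mod_2_bit)
  qed
qed

definition syndrome_code :: "nat list \<Rightarrow> nat" where
  "syndrome_code xs = foldr (\<lambda>j. xor (H_OK_code j)) xs 0"

lemma colsum_H_OK_set:
  "distinct xs \<Longrightarrow> set xs \<subseteq> {1..18} \<Longrightarrow> colsum H_OK (set xs) = bitvec 9 (syndrome_code xs)"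
  unfolding syndrome_code_def by (rule colsum_set_eq_bitvec) (auto simp: H_OK_eq_bitvec)

lemma distinct_H_OK_codes: "distinct (map (take_bit 9 \<circ> H_OK_code) [1..<19])"
  by (simp add: H_OK_code_def M_OK_hex_def upt_rec)

lemma H_OK_code_nonzero: "\<forall>a\<in>{1..18}. take_bit 9 (H_OK_code a) \<noteq> 0"
  by (simp add: H_OK_code_def M_OK_hex_def upt_rec atLeastAtMost_upt)

lemma H_OK_code_sums_ne_14:
  "\<forall>a\<in>{1..18}. take_bit 9 (H_OK_code a) \<noteq> 14 \<and>
     (\<forall>b\<in>{1..18}. take_bit 9 (xor (H_OK_code a) (H_OK_code b)) \<noteq> 14)"
  by (simp add: H_OK_code_def M_OK_hex_def upt_rec atLeastAtMost_upt)

lemma inj_on_H_OK: "inj_on H_OK {1..18}"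
proof (rule inj_onI)
  fix a b assume ab: "a \<in> {1..18}" "b \<in> {1..18}" and "H_OK a = H_OK b"
  then have "(take_bit 9 \<circ> H_OK_code) a = (take_bit 9 \<circ> H_OK_code) b"
    by (simp add: H_OK_eq_bitvec bitvec_eq_iff)
  moreover have "inj_on (take_bit 9 \<circ> H_OK_code) {1..18}"
    using distinct_H_OK_codes by (simp add: distinct_map atLeastAtMost_upt)
  ultimately show "a = b" using ab by (meson inj_onD)
qed

lemma H_OK_nonzero: "\<forall>j\<in>{1..18}. H_OK j \<noteq> (\<lambda>_. 0)"
proof
  fix j :: nat assume "j \<in> {1..18}"
  then show "H_OK j \<noteq> (\<lambda>_. 0)"
    using H_OK_code_nonzero bitvec_eq_iff[of 9 "H_OK_code j" 0] by (simp add: H_OK_eq_bitvec)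
qed

lemma colsum_H_OK_6_9_16: "colsum H_OK {6, 9, 16} = (\<lambda>_. 0)"
  using colsum_H_OK_set[of "[6, 9, 16]"]
  by (simp add: syndrome_code_def H_OK_code_def M_OK_hex_def)

lemma colsum_H_OK_ne_14:
  assumes "S \<subseteq> {1..18}" "card S \<le> 2"
  shows "colsum H_OK S \<noteq> bitvec 9 14"
  using finite_subset[OF assms(1) finite_atLeastAtMost] assms(2)
proof (cases rule: colsum_card_le_2_cases[where H = H_OK])
  case empty
  then show ?thesis using bitvec_eq_iff[of 9 0 14] by simp
next
  case (singleton a)
  then show ?thesis
    using assms(1) H_OK_code_sums_ne_14 by (simp add: H_OK_eq_bitvec bitvec_eq_iff)
next
  case (pair a b)
  then show ?thesis
    using assms(1) H_OK_code_sums_ne_14 by (simp add: H_OK_eq_bitvec bitvec_eq_iff flip: bitvec_xor)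
qed

definition P_OK_label :: "nat \<Rightarrow> nat" where
  "P_OK_label j = [0, 0, 1, 0, 2, 3, 4, 2, 9, 4, 5, 6, 7, 5, 8, 10, 3, 7] ! (j - 1)"

lemma P_OK_label_const: "B \<in> P_OK \<Longrightarrow> x \<in> B \<Longrightarrow> y \<in> B \<Longrightarrow> P_OK_label x = P_OK_label y"
  by (auto simp: P_OK_def P_OK_label_def)

lemma is_col_partition_P_OK: "is_col_partition 18 P_OK"
proof -
  have "\<Union>P_OK = {1..18}"
    unfolding P_OK_def by (rule set_eqI) (simp, presburger)
  then show ?thesis
    unfolding is_col_partition_def by (simp add: P_OK_def)
qed

definition admissible_witness :: "nat list \<Rightarrow> bool" where
  "admissible_witness xs \<longleftrightarrow> xs \<noteq> [] \<and> length xs \<le> 3 \<and> distinct xs \<and> set xs \<subseteq> {1..18}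
     \<and> distinct (map P_OK_label xs)"

text \<open>Entry \<open>c\<close> is an admissible witness for the syndrome with code \<open>c\<close> (found by computer search).\<close>

definition syndrome_witnesses :: "nat list list" where
  "syndrome_witnesses =
    [[6,9,16], [9], [8], [8,9], [7], [7,9], [7,8], [5,14], [6], [16], [6,8], [8,16], [6,7], [7,16], [5,14,16], [5,6,14],
    [5], [5,9], [7,9,14], [7,14], [5,7], [8,14], [9,14], [14], [5,6], [5,16], [7,14,16], [6,7,14], [5,6,7], [5,7,16], [14,16], [6,14],
    [4], [4,9], [4,8], [4,8,9], [4,7], [2,12], [1,15,18], [2,8,12], [4,6], [4,16], [4,6,8], [4,8,16], [2,12,16], [10,17], [3,10,18], [8,10,17],
    [4,5], [4,5,9], [2,12,14], [1,3,13], [1,3,11], [2,5,12], [4,9,14], [4,14], [4,5,6], [4,5,16], [2,11,18], [10,13,15], [10,11,15], [5,10,17], [4,14,16], [4,6,14],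
    [3], [3,9], [3,8], [17,18], [3,7], [3,7,9], [3,7,8], [3,5,14], [3,6], [3,16], [3,6,8], [3,8,16], [3,6,7], [12,15], [4,10,18], [8,12,15],
    [3,5], [3,5,9], [11,15,18], [2,10,13], [2,10,11], [3,8,14], [3,9,14], [3,14], [3,5,6], [3,5,16], [12,14,15], [12,13,17], [11,12,17], [5,12,15], [3,14,16], [3,6,14],
    [3,4], [2,15,16], [3,4,8], [1,5,13], [1,5,11], [1,15,17], [6,10,18], [10,16,18], [2,15], [2,9,15], [2,8,15], [1,12,18], [2,7,15], [3,10,17], [10,18], [9,10,18],
    [1,7,11], [1,8,13], [1,9,13], [1,13], [1,11], [1,9,11], [1,8,11], [1,7,13], [2,5,15], [2,11,17], [1,13,16], [1,6,13], [1,6,11], [1,11,16], [2,13,17], [2,14,15],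
    [2], [2,9], [2,8], [2,8,9], [2,7], [4,12], [2,7,8], [2,5,14], [2,6], [2,16], [2,6,8], [2,8,16], [1,9,17], [1,17], [1,3,18], [1,8,17],
    [2,5], [2,5,9], [4,12,14], [2,7,14], [2,5,7], [2,8,14], [2,9,14], [2,14], [2,5,6], [2,5,16], [1,14,17], [1,13,15], [1,11,15], [1,5,17], [2,14,16], [2,6,14],
    [1,10], [7,12], [1,8,10], [7,8,12], [9,12], [12], [8,9,12], [8,12], [3,15], [1,10,16], [3,8,15], [15,17,18], [12,16], [6,12], [8,12,16], [6,8,12],
    [1,5,10], [5,7,12], [12,14], [9,12,14], [5,9,12], [5,12], [7,12,14], [1,10,14], [3,5,15], [3,11,17], [11,18], [9,11,18], [5,12,16], [5,6,12], [3,13,17], [3,14,15],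
    [2,3], [2,3,9], [2,3,8], [2,17,18], [2,3,7], [3,4,12], [1,6,18], [1,16,18], [4,15], [2,3,16], [1,7,18], [10,12,18], [1,8,18], [1,3,17], [1,18], [1,9,18],
    [2,3,5], [1,11,12], [9,10,13], [10,13], [10,11], [9,10,11], [1,12,13], [2,3,14], [4,5,15], [1,14,18], [10,13,16], [6,10,13], [6,10,11], [10,11,16], [1,5,18], [4,14,15],
    [6,15], [15,16], [6,8,15], [8,15,16], [3,9,12], [3,12], [12,17,18], [3,8,12], [15], [9,15], [8,15], [8,9,15], [7,15], [3,6,12], [2,10,18], [5,14,15],
    [5,6,15], [5,15,16], [3,12,14], [4,10,13], [4,10,11], [3,5,12], [14,15,16], [6,14,15], [5,15], [11,17], [3,11,18], [7,14,15], [5,7,15], [7,11,17], [13,17], [14,15],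
    [1], [1,9], [1,8], [1,8,9], [1,7], [10,12], [1,7,8], [1,5,14], [1,6], [1,16], [1,6,8], [1,8,16], [1,6,7], [2,17], [2,3,18], [2,8,17],
    [1,5], [1,5,9], [10,12,14], [1,7,14], [1,5,7], [1,8,14], [1,9,14], [1,14], [1,5,6], [1,5,16], [2,14,17], [2,13,15], [2,11,15], [2,5,17], [1,14,16], [1,6,14],
    [2,10], [2,9,10], [2,8,10], [3,5,13], [3,5,11], [3,15,17], [15,18], [9,15,18], [12,17], [2,10,16], [8,12,17], [3,12,18], [7,12,17], [1,10,17], [6,15,18], [15,16,18],
    [2,5,10], [3,8,13], [3,9,13], [3,13], [3,11], [3,9,11], [3,8,11], [2,10,14], [5,12,17], [11,12,15], [3,13,16], [3,6,13], [3,6,11], [3,11,16], [12,13,15], [12,14,17],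
    [1,3], [1,3,9], [1,3,8], [1,17,18], [1,3,7], [3,10,12], [2,6,18], [2,16,18], [10,15], [1,3,16], [2,7,18], [4,12,18], [2,8,18], [1,12,15], [2,18], [2,9,18],
    [1,3,5], [2,11,12], [4,9,13], [4,13], [4,11], [4,9,11], [2,12,13], [1,3,14], [5,10,15], [2,14,18], [4,13,16], [4,6,13], [4,6,11], [4,11,16], [2,5,18], [10,14,15],
    [2,3,10], [7,15,17], [5,9,13], [5,13], [5,11], [15,17], [3,15,18], [5,7,13], [3,12,17], [8,12,18], [5,13,16], [12,18], [5,6,11], [5,11,16], [1,10,18], [7,12,18],
    [7,11], [8,13], [9,13], [13], [11], [9,11], [8,11], [7,13], [6,7,11], [6,8,13], [13,16], [6,13], [6,11], [11,16], [6,8,11], [6,7,13],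
    [4,10], [4,9,10], [4,8,10], [12,15,18], [16,17], [2,10,12], [3,6,18], [3,16,18], [4,6,10], [7,17], [3,7,18], [5,13,15], [9,17], [17], [3,18], [8,17],
    [4,5,10], [3,11,12], [13,15,16], [6,13,15], [5,16,17], [11,15,16], [3,12,13], [4,10,14], [7,11,15], [3,14,18], [14,17], [13,15], [11,15], [5,17], [3,5,18], [7,13,15],
    [10], [9,10], [8,10], [8,9,10], [1,9,12], [1,12], [2,15,18], [1,8,12], [6,10], [10,16], [6,8,10], [8,10,16], [1,12,16], [4,17], [3,4,18], [4,8,17],
    [5,10], [5,9,10], [1,12,14], [2,3,13], [2,3,11], [1,5,12], [9,10,14], [10,14], [5,6,10], [5,10,16], [1,11,18], [4,13,15], [4,11,15], [4,5,17], [10,14,16], [6,10,14],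
    [3,4,10], [5,11,12], [6,7,18], [7,16,18], [3,16,17], [8,16,18], [6,18], [16,18], [2,10,15], [3,7,17], [7,18], [7,9,18], [8,18], [3,17], [18], [9,18],
    [9,11,12], [11,12], [7,12,13], [1,10,13], [1,10,11], [7,11,12], [12,13], [5,16,18], [9,14,18], [14,18], [3,14,17], [3,13,15], [3,11,15], [3,5,17], [5,18], [5,9,18],
    [3,10], [1,15,16], [3,8,10], [2,5,13], [2,5,11], [1,3,12], [4,6,18], [4,16,18], [1,15], [1,9,15], [1,8,15], [2,12,18], [1,7,15], [3,4,17], [4,18], [4,9,18],
    [2,7,11], [2,8,13], [2,9,13], [2,13], [2,11], [2,9,11], [2,8,11], [2,7,13], [1,5,15], [1,11,17], [2,13,16], [2,6,13], [2,6,11], [2,11,16], [1,13,17], [1,14,15]]"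

lemma syndrome_witnesses_code: "map syndrome_code syndrome_witnesses = [0..<512]"
  by (simp add: syndrome_witnesses_def syndrome_code_def H_OK_code_def M_OK_hex_def upt_rec)

lemma syndrome_witnesses_admissible: "list_all admissible_witness syndrome_witnesses"
  by (simp add: syndrome_witnesses_def admissible_witness_def P_OK_label_def)

lemma H_OK_P_OK_covering:
  assumes "v \<in> vecs 9"
  shows "\<exists>S. S \<subseteq> {1..18} \<and> transversal P_OK S \<and> 1 \<le> card S \<and> card S \<le> 3 \<and> colsum H_OK S = v"
proof -
  obtain c where c: "c < 512" "v = bitvec 9 c"
    using assms by (auto simp: vecs_eq_bitvec_image)
  have len: "length syndrome_witnesses = 512"
    using arg_cong[OF syndrome_witnesses_code, of length] by simp
  define xs where "xs = syndrome_witnesses ! c"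
  have "admissible_witness xs"
    using syndrome_witnesses_admissible c(1) len by (simp add: xs_def list_all_length)
  then have xs: "xs \<noteq> []" "length xs \<le> 3" "distinct xs" "set xs \<subseteq> {1..18}"
      "inj_on P_OK_label (set xs)"
    by (auto simp: admissible_witness_def distinct_map)
  have "syndrome_code xs = c"
    using arg_cong[OF syndrome_witnesses_code, of "\<lambda>ys. ys ! c"] c(1) len by (simp add: xs_def)
  then have "colsum H_OK (set xs) = v"
    using colsum_H_OK_set xs c(2) by simp
  moreover have "transversal P_OK (set xs)"
    using P_OK_label_const xs(5) by (rule transversal_if_inj_on_label)
  ultimately show ?thesis
    using xs by (intro exI[of _ "set xs"]) (auto simp: distinct_card Suc_le_eq)
qed

theorem theorem7p1:
  shows "is_Rl_partition 9 18 H_OK 3 1 P_OK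
         \<and> min_distance 18 H_OK = 3
         \<and> covering_radius 9 18 H_OK = 3"
proof (intro conjI)
  show "is_Rl_partition 9 18 H_OK 3 1 P_OK"
    unfolding is_Rl_partition_def using is_col_partition_P_OK H_OK_P_OK_covering by simp
  show "min_distance 18 H_OK = 3"
    by (rule min_distance_eq_3I[OF inj_on_H_OK H_OK_nonzero _ _ colsum_H_OK_6_9_16]) auto
  show "covering_radius 9 18 H_OK = 3"
  proof (rule covering_radius_eqI[where v = "bitvec 9 14"])
    show "\<forall>v\<in>vecs 9. \<exists>S. S \<subseteq> {1..18} \<and> card S \<le> 3 \<and> colsum H_OK S = v"
      using H_OK_P_OK_covering by blast
  qed (use bitvec_in_vecs colsum_H_OK_ne_14 in auto)
qed

end
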